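(* Let $Y,\widehat{Y},A$ be $\{0,1\}$-valued random variables on a common probability space with $\Pr\{A=a,Y=y\}>0$ for all $a,y$, and let $\ell:\{0,1\}^2\to\mathbb{R}$ be a loss function. Consider the optimization problem $$\min_{\widetilde{Y}}\ \mathbb{E}\,\ell(\widetilde{Y},Y)\quad\text{s.t.}\quad \gamma_a(\widetilde{Y})\in P_a(\widehat{Y})\ \text{for all } a\in\{0,1\},\qquad \gamma_0(\widetilde{Y})=\gamma_1(\widetilde{Y}),$$ where $\widetilde{Y}$ ranges over predictors derived from $(\widehat{Y},A)$, parametrized by the four numbers $\Pr\{\widetilde{Y}=1\mid\widehat{Y}=\hat y,A=a\}\in[0,1]$. This problem is a linear program in these four variables whose coefficients can be computed from the joint distribution of $(\widehat{Y},A,Y)$. Moreover, its solution is an optimal equalized odds predictor derived from $\widehat{Y}$ and $A$, i.e. it minimizes $\mathbb{E}\,\ell(\widetilde{Y},Y)$ among all predictors derived from $(\widehat{Y},A)$ that satisfy equalized odds.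
   Context: For a $\{0,1\}$-valued predictor $Z$ and $a\in\{0,1\}$, $\gamma_a(Z)=\left(\Pr\{Z=1\mid A=a,Y=0\},\ \Pr\{Z=1\mid A=a,Y=1\}\right)$, and $P_a(\widehat{Y})=\mathrm{convhull}\{(0,0),\gamma_a(\widehat{Y}),\gamma_a(1-\widehat{Y}),(1,1)\}$. A predictor is derived from $(\widehat{Y},A)$ if it is a possibly randomized function of $(\widehat{Y},A)$ alone (randomness independent of everything else). A predictor $\widetilde{Y}$ satisfies equalized odds (with respect to $A$ and $Y$) if $\widetilde{Y}$ and $A$ are independent conditional on $Y$; for binary variables this is equivalent to $\gamma_0(\widetilde{Y})=\gamma_1(\widetilde{Y})$. *)

theory Defs
  imports "HOL-Analysis.Analysis"
begin

text \<open>The joint distribution of (Yhat, A, Y) on {0,1}^3 (False = 0, True = 1) is given by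
  its probability mass function p yh a y = Pr{Yhat = yh, A = a, Y = y}.
  A predictor Ytilde derived from (Yhat, A) is given by its parameters
  q yh a = Pr{Ytilde = 1 | Yhat = yh, A = a}; its randomness being independent of
  everything else, Pr{Ytilde = 1, Yhat = yh, A = a, Y = y} = p yh a y * q yh a.\<close>

type_synonym joint = "bool \<Rightarrow> bool \<Rightarrow> bool \<Rightarrow> real"
type_synonym derived = "bool \<Rightarrow> bool \<Rightarrow> real"

definition is_joint_pmf :: "joint \<Rightarrow> bool" where
  "is_joint_pmf p \<longleftrightarrow> (\<forall>yh a y. 0 \<le> p yh a y) \<and>
     (\<Sum>yh\<in>UNIV. \<Sum>a\<in>UNIV. \<Sum>y\<in>UNIV. p yh a y) = 1"

definition prAY :: "joint \<Rightarrow> bool \<Rightarrow> bool \<Rightarrow> real" where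
  "prAY p a y = (\<Sum>yh\<in>UNIV. p yh a y)"

definition is_derived :: "derived \<Rightarrow> bool" where
  "is_derived q \<longleftrightarrow> (\<forall>yh a. 0 \<le> q yh a \<and> q yh a \<le> 1)"

definition cond_rate :: "joint \<Rightarrow> derived \<Rightarrow> bool \<Rightarrow> bool \<Rightarrow> real" where
  "cond_rate p q a y = (\<Sum>yh\<in>UNIV. p yh a y * q yh a) / prAY p a y"

definition gamma :: "joint \<Rightarrow> derived \<Rightarrow> bool \<Rightarrow> real \<times> real" where
  "gamma p q a = (cond_rate p q a False, cond_rate p q a True)"

definition pred_Yhat :: derived where
  "pred_Yhat = (\<lambda>yh a. if yh then 1 else 0)"

definition pred_not_Yhat :: derived where
  "pred_not_Yhat = (\<lambda>yh a. if yh then 0 else 1)"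

definition P_region :: "joint \<Rightarrow> bool \<Rightarrow> (real \<times> real) set" where
  "P_region p a = convex hull {(0,0), gamma p pred_Yhat a, gamma p pred_not_Yhat a, (1,1)}"

text \<open>E l(Ytilde, Y), the loss l taking (prediction, true label).\<close>
definition expected_loss :: "joint \<Rightarrow> (bool \<Rightarrow> bool \<Rightarrow> real) \<Rightarrow> derived \<Rightarrow> real" where
  "expected_loss p l q = (\<Sum>yh\<in>UNIV. \<Sum>a\<in>UNIV. \<Sum>y\<in>UNIV.
      p yh a y * (q yh a * l True y + (1 - q yh a) * l False y))"

definition equalized_odds :: "joint \<Rightarrow> derived \<Rightarrow> bool" where
  "equalized_odds p q \<longleftrightarrow> gamma p q False = gamma p q True"

definition lp_feasible :: "joint \<Rightarrow> derived \<Rightarrow> bool" where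
  "lp_feasible p q \<longleftrightarrow> is_derived q \<and> (\<forall>a. gamma p q a \<in> P_region p a)
      \<and> gamma p q False = gamma p q True"

definition lp_solution :: "joint \<Rightarrow> (bool \<Rightarrow> bool \<Rightarrow> real) \<Rightarrow> derived \<Rightarrow> bool" where
  "lp_solution p l q \<longleftrightarrow> lp_feasible p q \<and>
      (\<forall>q'. lp_feasible p q' \<longrightarrow> expected_loss p l q \<le> expected_loss p l q')"

definition linform :: "(bool \<Rightarrow> bool \<Rightarrow> real) \<Rightarrow> derived \<Rightarrow> real" where
  "linform w q = (\<Sum>yh\<in>UNIV. \<Sum>a\<in>UNIV. w yh a * q yh a)"

end

theory Submission
  imports Defs
begin

text \<open>Since a derived predictor is randomized independently of Y, its rates satisfy
  \<open>\<gamma>\<^sub>a(q) = q(1,a) \<gamma>\<^sub>a(Yhat) + q(0,a) \<gamma>\<^sub>a(1 - Yhat)\<close> with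
  \<open>\<gamma>\<^sub>a(Yhat) + \<gamma>\<^sub>a(1 - Yhat) = (1,1)\<close>. Hence \<open>\<gamma>\<^sub>a(q)\<close> is a convex combination of
  (0,0), (1,1) and whichever of \<open>\<gamma>\<^sub>a(Yhat)\<close>, \<open>\<gamma>\<^sub>a(1 - Yhat)\<close> carries the larger
  parameter, so the constraint \<open>\<gamma>\<^sub>a \<in> P\<^sub>a\<close> is redundant and the feasible set is exactly
  the set of derived predictors with equalized odds. The box constraints, the equations
  \<open>\<gamma>\<^sub>0 = \<gamma>\<^sub>1\<close> (the denominators \<open>Pr{A=a,Y=y}\<close> being constants) and the expected loss
  are affine in q.\<close>

lemma gamma_eq_combination:
  assumes "prAY p a False > 0" "prAY p a True > 0"
  shows "gamma p q a = q True a *\<^sub>R gamma p pred_Yhat a + q False a *\<^sub>R gamma p pred_not_Yhat a"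
  using assms
  by (auto simp: gamma_def cond_rate_def pred_Yhat_def pred_not_Yhat_def UNIV_bool prAY_def
      add_divide_distrib [symmetric] field_simps)

lemma gamma_Yhat_add_gamma_not_Yhat:
  assumes "prAY p a False > 0" "prAY p a True > 0"
  shows "gamma p pred_Yhat a + gamma p pred_not_Yhat a = (1, 1)"
  using assms
  by (auto simp: gamma_def cond_rate_def pred_Yhat_def pred_not_Yhat_def UNIV_bool prAY_def
      add_divide_distrib [symmetric])

lemma scaleR_add_mem_convex_hull_0_1:
  fixes g h :: "real \<times> real"
  assumes "g + h = (1, 1)" "0 \<le> s" "s \<le> t" "t \<le> 1"
  shows "t *\<^sub>R g + s *\<^sub>R h \<in> convex hull {(0, 0), g, (1, 1)}"
proof -
  have "t *\<^sub>R g + s *\<^sub>R h = (1 - t) *\<^sub>R (0, 0) + (t - s) *\<^sub>R g + s *\<^sub>R (1, 1)"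
    unfolding assms(1)[symmetric] by (simp add: prod_eq_iff algebra_simps)
  then show ?thesis
    unfolding convex_hull_3 using assms(2-4)
    by (intro CollectI exI[of _ "1 - t"] exI[of _ "t - s"] exI[of _ s]) auto
qed

lemma gamma_mem_P_region:
  assumes "prAY p a False > 0" "prAY p a True > 0" "is_derived q"
  shows "gamma p q a \<in> P_region p a"
proof -
  define gY where "gY = gamma p pred_Yhat a"
  define gN where "gN = gamma p pred_not_Yhat a"
  have gamma_q: "gamma p q a = q True a *\<^sub>R gY + q False a *\<^sub>R gN"
    unfolding gY_def gN_def using gamma_eq_combination[OF assms(1,2)] .
  have sum_1: "gY + gN = (1, 1)" "gN + gY = (1, 1)"
    unfolding gY_def gN_def using gamma_Yhat_add_gamma_not_Yhat[OF assms(1,2)] by (simp_all add: add.commute)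
  have bounds: "0 \<le> q yh a" "q yh a \<le> 1" for yh
    using assms(3) by (auto simp: is_derived_def)
  have "gamma p q a \<in> convex hull {(0, 0), gY, (1, 1)} \<union> convex hull {(0, 0), gN, (1, 1)}"
  proof (cases "q False a \<le> q True a")
    case True
    then show ?thesis
      unfolding gamma_q using scaleR_add_mem_convex_hull_0_1[OF sum_1(1)] bounds by blast
  next
    case False
    then show ?thesis
      unfolding gamma_q add.commute[of "q True a *\<^sub>R gY"]
      using scaleR_add_mem_convex_hull_0_1[OF sum_1(2)] bounds by force
  qed
  moreover have "convex hull {(0, 0), gY, (1, 1)} \<union> convex hull {(0, 0), gN, (1, 1)} \<subseteq> P_region p a"
    unfolding P_region_def gY_def gN_def by (intro Un_least hull_mono) auto
  ultimately show ?thesis by blast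
qed

lemma lp_feasible_iff:
  assumes "\<forall>a y. prAY p a y > 0"
  shows "lp_feasible p q \<longleftrightarrow> is_derived q \<and> equalized_odds p q"
  using gamma_mem_P_region assms unfolding lp_feasible_def equalized_odds_def by blast

lemma expected_loss_affine:
  "expected_loss p l q = (\<Sum>yh\<in>UNIV. \<Sum>a\<in>UNIV. \<Sum>y\<in>UNIV. p yh a y * l False y)
     + linform (\<lambda>yh a. \<Sum>y\<in>UNIV. p yh a y * (l True y - l False y)) q"
  by (simp add: expected_loss_def linform_def UNIV_bool algebra_simps)

lemma linform_uminus: "linform (- w) q = - linform w q"
  by (simp add: linform_def sum_negf)

definition coord_weight :: "bool \<Rightarrow> bool \<Rightarrow> bool \<Rightarrow> bool \<Rightarrow> real" where
  "coord_weight yh a = (\<lambda>yh' a'. if yh' = yh \<and> a' = a then 1 else 0)"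

lemma linform_coord_weight: "linform (coord_weight yh a) q = q yh a"
  by (cases yh; cases a) (simp_all add: linform_def coord_weight_def UNIV_bool)

definition odds_gap_weight :: "joint \<Rightarrow> bool \<Rightarrow> bool \<Rightarrow> bool \<Rightarrow> real" where
  "odds_gap_weight p y = (\<lambda>yh a. if a then - p yh True y / prAY p True y
                                       else p yh False y / prAY p False y)"

lemma linform_odds_gap_weight:
  "linform (odds_gap_weight p y) q = cond_rate p q False y - cond_rate p q True y"
  by (simp add: linform_def odds_gap_weight_def cond_rate_def UNIV_bool
      add_divide_distrib diff_divide_distrib)

definition eo_constraints :: "joint \<Rightarrow> ((bool \<Rightarrow> bool \<Rightarrow> real) \<times> real) set" where
  "eo_constraints p =
     (\<lambda>(yh, a). (coord_weight yh a, 1)) ` UNIV \<union> (\<lambda>(yh, a). (- coord_weight yh a, 0)) ` UNIV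
     \<union> (\<lambda>y. (odds_gap_weight p y, 0)) ` UNIV \<union> (\<lambda>y. (- odds_gap_weight p y, 0)) ` UNIV"

lemma finite_eo_constraints: "finite (eo_constraints p)"
  by (simp add: eo_constraints_def)

lemma eo_constraints_iff:
  "(\<forall>(w, b)\<in>eo_constraints p. linform w q \<le> b) \<longleftrightarrow> is_derived q \<and> equalized_odds p q"
proof -
  have "(\<forall>(w, b)\<in>eo_constraints p. linform w q \<le> b) \<longleftrightarrow>
        (\<forall>yh a. linform (coord_weight yh a) q \<le> 1 \<and> linform (- coord_weight yh a) q \<le> 0) \<and>
        (\<forall>y. linform (odds_gap_weight p y) q \<le> 0 \<and> linform (- odds_gap_weight p y) q \<le> 0)"
    unfolding eo_constraints_def by fastforce
  also have "\<dots> \<longleftrightarrow> (\<forall>yh a. q yh a \<le> 1 \<and> 0 \<le> q yh a) \<and>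
        (\<forall>y. cond_rate p q False y - cond_rate p q True y \<le> 0 \<and>
             cond_rate p q True y - cond_rate p q False y \<le> 0)"
    by (simp add: linform_uminus linform_coord_weight linform_odds_gap_weight)
  also have "\<dots> \<longleftrightarrow> is_derived q \<and> (\<forall>y. cond_rate p q False y = cond_rate p q True y)"
    by (auto simp: is_derived_def intro: order.antisym)
  also have "\<dots> \<longleftrightarrow> is_derived q \<and> equalized_odds p q"
    by (auto simp: equalized_odds_def gamma_def) (metis (full_types))
  finally show ?thesis .
qed

theorem proposition4p4:
  fixes p :: joint and l :: "bool \<Rightarrow> bool \<Rightarrow> real"
  assumes "is_joint_pmf p"
    and "\<forall>a y. prAY p a y > 0"
  shows "(\<exists>c0 c. \<forall>q. expected_loss p l q = c0 + linform c q)
       \<and> (\<exists>S :: ((bool \<Rightarrow> bool \<Rightarrow> real) \<times> real) set. finite S \<and>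
            (\<forall>q. lp_feasible p q \<longleftrightarrow> (\<forall>(w, b)\<in>S. linform w q \<le> b)))
       \<and> (\<forall>q. lp_solution p l q \<longrightarrow>
            is_derived q \<and> equalized_odds p q \<and>
            (\<forall>q'. is_derived q' \<and> equalized_odds p q' \<longrightarrow>
                  expected_loss p l q \<le> expected_loss p l q'))"
proof (intro conjI)
  show "\<exists>c0 c. \<forall>q. expected_loss p l q = c0 + linform c q"
    by (intro exI allI) (rule expected_loss_affine)
  show "\<exists>S. finite S \<and> (\<forall>q. lp_feasible p q \<longleftrightarrow> (\<forall>(w, b)\<in>S. linform w q \<le> b))"
    by (intro exI[of _ "eo_constraints p"])
      (simp add: finite_eo_constraints eo_constraints_iff lp_feasible_iff[OF assms(2)])
  show "\<forall>q. lp_solution p l q \<longrightarrow> is_derived q \<and> equalized_odds p q \<and>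
          (\<forall>q'. is_derived q' \<and> equalized_odds p q' \<longrightarrow> expected_loss p l q \<le> expected_loss p l q')"
    by (simp add: lp_solution_def lp_feasible_iff[OF assms(2)])
qed

end
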